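(* Let $\mathcal{X}=\mathbb{R}^d$ with Euclidean metric $|\cdot|_2$, let $\mu,\nu$ be Borel probability measures on $\mathbb{R}^d$ with $\nu$ having finite first moment and not a Dirac measure, and let $\pi\in\Pi(\mu,\nu)$. Define $$T^{\mathrm{DGS}}(\pi)=1-\frac{\int\int\int|y-z|_2\,\pi_{x_1}(dy)\,\pi_{x_1}(dz)\,\mu(dx_1)}{\int\int|y-z|_2\,\nu(dy)\,\nu(dz)}.$$ Then $T^{\mathrm{DGS}}(\pi)\le 2\,\overrightarrow{\mathcal{W}}(\pi)$.
   Context: $\Pi(\mu,\nu)$ is the set of couplings of $\mu,\nu$; $\pi_{x_1}$ is the disintegration of $\pi$ w.r.t. the first coordinate. $\mathcal{W}(\alpha,\beta)=\inf_{\gamma\in\Pi(\alpha,\beta)}\int|x-y|_2\,\gamma(dx,dy)$. The Wasserstein correlation coefficient is $\overrightarrow{\mathcal{W}}(\pi)=\int\mathcal{W}(\pi_{x_1},\nu)\,\mu(dx_1)\big/\int\int|y-z|_2\,\nu(dy)\nu(dz)$. *)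

theory Defs
  imports "HOL-Probability.Probability"
begin

definition couplings :: "'a::euclidean_space measure \<Rightarrow> 'b::euclidean_space measure \<Rightarrow> ('a \<times> 'b) measure set" where
  "couplings \<alpha> \<beta> = {\<gamma>. sets \<gamma> = sets borel \<and> distr \<gamma> borel fst = \<alpha> \<and> distr \<gamma> borel snd = \<beta>}"

definition W1 :: "'a::euclidean_space measure \<Rightarrow> 'a measure \<Rightarrow> ennreal" where
  "W1 \<alpha> \<beta> = (INF \<gamma> \<in> couplings \<alpha> \<beta>. \<integral>\<^sup>+ p. ennreal (dist (fst p) (snd p)) \<partial>\<gamma>)"

text \<open>K is a disintegration (regular conditional kernel) of \<pi> w.r.t. the first coordinate:
  \<pi>(dx,dy) = \<mu>(dx) K x (dy).\<close>
definition is_disintegration :: "'a::euclidean_space measure \<Rightarrow> ('a \<times> 'b::euclidean_space) measure \<Rightarrow> ('a \<Rightarrow> 'b measure) \<Rightarrow> bool" where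
  "is_disintegration \<mu> \<pi> K \<longleftrightarrow>
     K \<in> \<mu> \<rightarrow>\<^sub>M prob_algebra borel \<and>
     \<pi> = \<mu> \<bind> (\<lambda>x. K x \<bind> (\<lambda>y. return borel (x, y)))"

definition mean_pair_dist :: "'a::euclidean_space measure \<Rightarrow> ennreal" where
  "mean_pair_dist \<nu> = (\<integral>\<^sup>+ y. \<integral>\<^sup>+ z. ennreal (dist y z) \<partial>\<nu> \<partial>\<nu>)"

text \<open>Wasserstein correlation coefficient of \<pi>, expressed via its disintegration K.\<close>
definition W_corr :: "'a::euclidean_space measure \<Rightarrow> 'a measure \<Rightarrow> ('a \<Rightarrow> 'a measure) \<Rightarrow> real" where
  "W_corr \<mu> \<nu> K = enn2real (\<integral>\<^sup>+ x. W1 (K x) \<nu> \<partial>\<mu>) / enn2real (mean_pair_dist \<nu>)"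

definition T_DGS :: "'a::euclidean_space measure \<Rightarrow> 'a measure \<Rightarrow> ('a \<Rightarrow> 'a measure) \<Rightarrow> real" where
  "T_DGS \<mu> \<nu> K = 1 - enn2real (\<integral>\<^sup>+ x. \<integral>\<^sup>+ y. \<integral>\<^sup>+ z. ennreal (dist y z) \<partial>K x \<partial>K x \<partial>\<mu>)
                       / enn2real (mean_pair_dist \<nu>)"

end

theory Submission
  imports Defs
begin

(* Write D(rho) for the mean pairwise distance of rho. If gamma couples rho with nu and
   (X, Y), (X', Y') are independent draws from gamma, then
   |Y - Y'| <= |Y - X| + |X - X'| + |X' - Y'|, so D(nu) <= D(rho) + 2 * cost(gamma).
   Optimising over gamma with rho = pi_x gives D(nu) <= D(pi_x) + 2 W(pi_x, nu) for every x;
   integrating in mu and dividing by D(nu) yields the theorem. D(nu) is finite because nu has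
   a first moment, and positive because nu is not a Dirac mass. *)

lemma measurable_fst_borel [measurable]:
  "fst \<in> (borel :: ('a::euclidean_space \<times> 'b::euclidean_space) measure) \<rightarrow>\<^sub>M borel"
  by (metis borel_prod measurable_fst)

lemma measurable_snd_borel [measurable]:
  "snd \<in> (borel :: ('a::euclidean_space \<times> 'b::euclidean_space) measure) \<rightarrow>\<^sub>M borel"
  by (metis borel_prod measurable_snd)

lemma sets_pair_measure_borel:
  fixes M :: "'a::euclidean_space measure" and N :: "'b::euclidean_space measure"
  assumes "sets M = sets borel" "sets N = sets borel"
  shows "sets (M \<Otimes>\<^sub>M N) = sets borel"
  using sets_pair_measure_cong[OF assms] borel_prod[where 'a='a and 'b='b] by metis

lemma couplings_sets: "\<gamma> \<in> couplings \<alpha> \<beta> \<Longrightarrow> sets \<gamma> = sets borel"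
  by (simp add: couplings_def)

lemma couplings_prob_space:
  assumes "prob_space \<alpha>" "\<gamma> \<in> couplings \<alpha> \<beta>"
  shows "prob_space \<gamma>"
proof (rule prob_space_distrD)
  show "fst \<in> \<gamma> \<rightarrow>\<^sub>M borel"
    using couplings_sets[OF assms(2)] by (simp cong: measurable_cong_sets)
  show "prob_space (distr \<gamma> borel fst)"
    using assms by (simp add: couplings_def)
qed

lemma nn_integral_distr_borel:
  assumes "sets M = sets (borel :: 'a::topological_space measure)"
    and "h \<in> borel \<rightarrow>\<^sub>M borel" "f \<in> borel_measurable borel"
  shows "(\<integral>\<^sup>+y. f y \<partial>distr M borel h) = (\<integral>\<^sup>+p. f (h p) \<partial>M)"
  using assms by (simp add: nn_integral_distr cong: measurable_cong_sets)

lemma nn_integral_couplings_fst: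
  assumes "\<gamma> \<in> couplings \<alpha> \<beta>" "f \<in> borel_measurable borel"
  shows "(\<integral>\<^sup>+x. f x \<partial>\<alpha>) = (\<integral>\<^sup>+p. f (fst p) \<partial>\<gamma>)"
  using assms nn_integral_distr_borel[of \<gamma> fst f] by (auto simp: couplings_def)

lemma nn_integral_couplings_snd:
  assumes "\<gamma> \<in> couplings \<alpha> \<beta>" "f \<in> borel_measurable borel"
  shows "(\<integral>\<^sup>+y. f y \<partial>\<beta>) = (\<integral>\<^sup>+p. f (snd p) \<partial>\<gamma>)"
  using assms nn_integral_distr_borel[of \<gamma> snd f] by (auto simp: couplings_def)

lemma distr_pair_measure_snd:
  assumes "prob_space M" "prob_space N"
  shows "distr (M \<Otimes>\<^sub>M N) N snd = N"
proof (rule measure_eqI)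
  interpret N: prob_space N by fact
  fix A assume A: "A \<in> sets (distr (M \<Otimes>\<^sub>M N) N snd)"
  then have "emeasure (distr (M \<Otimes>\<^sub>M N) N snd) A = emeasure (M \<Otimes>\<^sub>M N) (space M \<times> A)"
    by (auto simp: emeasure_distr space_pair_measure dest: sets.sets_into_space
             intro!: arg_cong2[where f=emeasure])
  with A show "emeasure (distr (M \<Otimes>\<^sub>M N) N snd) A = emeasure N A"
    using assms(1) by (simp add: N.emeasure_pair_measure_Times prob_space.emeasure_space_1)
qed simp

lemma pair_measure_in_couplings:
  fixes \<alpha> \<beta> :: "'a::euclidean_space measure"
  assumes "prob_space \<alpha>" "sets \<alpha> = sets borel" "prob_space \<beta>" "sets \<beta> = sets borel"
  shows "\<alpha> \<Otimes>\<^sub>M \<beta> \<in> couplings \<alpha> \<beta>"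
proof -
  have "distr (\<alpha> \<Otimes>\<^sub>M \<beta>) borel fst = distr (\<alpha> \<Otimes>\<^sub>M \<beta>) \<alpha> fst"
    "distr (\<alpha> \<Otimes>\<^sub>M \<beta>) borel snd = distr (\<alpha> \<Otimes>\<^sub>M \<beta>) \<beta> snd"
    using assms(2,4) by (auto intro: distr_cong)
  then show ?thesis
    using prob_space.distr_pair_fst[OF assms(3)] distr_pair_measure_snd[OF assms(1,3)] assms(2,4)
    by (simp add: couplings_def sets_pair_measure_borel)
qed

lemma ennreal_dist_le_norm_add: "ennreal (dist x y) \<le> ennreal (norm x) + ennreal (norm y)"
  by (simp add: dist_norm norm_triangle_ineq4 flip: ennreal_plus)

lemma ennreal_dist_triangle3:
  "ennreal (dist x y) \<le> ennreal (dist x u) + ennreal (dist u v) + ennreal (dist v y)"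
proof -
  have "dist x y \<le> dist x u + dist u v + dist v y"
    by (metis add_right_mono dist_triangle order_trans)
  then show ?thesis
    by (simp add: ennreal_leI flip: ennreal_plus)
qed

lemma ennreal_half_diff_le:
  fixes d a c :: ennreal
  assumes "d < top" "d \<le> a + 2 * c"
  shows "(d - a) / 2 \<le> c"
proof -
  have "d - a \<le> c * 2"
    using assms by (auto simp: ennreal_minus_le_iff mult.commute)
  then have "(d - a) / 2 \<le> c * 2 / 2"
    by (rule divide_right_mono_ennreal)
  also have "\<dots> = c"
    by (rule ennreal_mult_divide_eq) simp_all
  finally show ?thesis .
qed

lemma ennreal_le_add_twice_half_diff:
  fixes d a :: ennreal
  shows "d \<le> a + 2 * ((d - a) / 2)"
proof -
  have "2 * ((d - a) / 2) = (d - a) * 2 / 2"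
    by (simp add: ennreal_times_divide mult.commute)
  also have "\<dots> = d - a"
    by (rule ennreal_mult_divide_eq) simp_all
  finally show ?thesis
    using ennreal_minus_le_iff[of d a "d - a"] by simp
qed

lemma enn2real_one_minus_div_le:
  fixes d a w :: ennreal
  assumes "0 < d" "d < top" "a < top" "w < top" "d \<le> a + w"
  shows "1 - enn2real a / enn2real d \<le> enn2real w / enn2real d"
proof -
  have le: "enn2real d \<le> enn2real a + enn2real w"
    using assms by (metis enn2real_mono enn2real_plus ennreal_add_less_top)
  have pos: "0 < enn2real d"
    using assms by (simp add: enn2real_positive_iff)
  then have "1 - enn2real a / enn2real d = (enn2real d - enn2real a) / enn2real d"
    by (simp add: field_simps)
  also have "\<dots> \<le> enn2real w / enn2real d"
    using le pos by (intro divide_right_mono) auto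
  finally show ?thesis .
qed

lemma nn_integral_couplings_dist_le:
  assumes "\<gamma> \<in> couplings \<alpha> \<beta>"
  shows "(\<integral>\<^sup>+p. ennreal (dist (fst p) (snd p)) \<partial>\<gamma>)
           \<le> (\<integral>\<^sup>+x. ennreal (norm x) \<partial>\<alpha>) + (\<integral>\<^sup>+y. ennreal (norm y) \<partial>\<beta>)"
proof -
  have [measurable_cong]: "sets \<gamma> = sets borel"
    using assms by (rule couplings_sets)
  have "(\<integral>\<^sup>+p. ennreal (dist (fst p) (snd p)) \<partial>\<gamma>)
          \<le> (\<integral>\<^sup>+p. ennreal (norm (fst p)) + ennreal (norm (snd p)) \<partial>\<gamma>)"
    by (intro nn_integral_mono ennreal_dist_le_norm_add)
  also have "\<dots> = (\<integral>\<^sup>+p. ennreal (norm (fst p)) \<partial>\<gamma>) + (\<integral>\<^sup>+p. ennreal (norm (snd p)) \<partial>\<gamma>)"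
    by (rule nn_integral_add) measurable
  also have "\<dots> = (\<integral>\<^sup>+x. ennreal (norm x) \<partial>\<alpha>) + (\<integral>\<^sup>+y. ennreal (norm y) \<partial>\<beta>)"
    using assms by (simp add: nn_integral_couplings_fst nn_integral_couplings_snd)
  finally show ?thesis .
qed

lemma W1_le_first_moments:
  fixes \<alpha> \<beta> :: "'a::euclidean_space measure"
  assumes "prob_space \<alpha>" "sets \<alpha> = sets borel" "prob_space \<beta>" "sets \<beta> = sets borel"
  shows "W1 \<alpha> \<beta> \<le> (\<integral>\<^sup>+x. ennreal (norm x) \<partial>\<alpha>) + (\<integral>\<^sup>+y. ennreal (norm y) \<partial>\<beta>)"
  unfolding W1_def
  using pair_measure_in_couplings[OF assms] nn_integral_couplings_dist_le
  by (blast intro: INF_lower2)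

lemma mean_pair_dist_eq_pair_measure:
  fixes \<alpha> :: "'a::euclidean_space measure"
  assumes "sigma_finite_measure \<alpha>" "sets \<alpha> = sets borel"
  shows "mean_pair_dist \<alpha> = (\<integral>\<^sup>+w. ennreal (dist (fst w) (snd w)) \<partial>(\<alpha> \<Otimes>\<^sub>M \<alpha>))"
proof -
  have [measurable_cong]: "sets (\<alpha> \<Otimes>\<^sub>M \<alpha>) = sets borel"
    using assms(2) by (rule sets_pair_measure_borel[OF _ assms(2)])
  have "(\<lambda>w. ennreal (dist (fst w) (snd w))) \<in> borel_measurable (\<alpha> \<Otimes>\<^sub>M \<alpha>)"
    by measurable
  from sigma_finite_measure.nn_integral_fst[OF assms(1) this] show ?thesis
    by (simp add: mean_pair_dist_def)
qed

lemma mean_pair_dist_distr: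
  fixes h :: "'b \<Rightarrow> 'a::euclidean_space"
  assumes "prob_space M" and [measurable]: "h \<in> M \<rightarrow>\<^sub>M borel"
  shows "mean_pair_dist (distr M borel h)
           = (\<integral>\<^sup>+w. ennreal (dist (h (fst w)) (h (snd w))) \<partial>(M \<Otimes>\<^sub>M M))"
proof -
  have "sigma_finite_measure (distr M borel h)"
    using assms by (simp add: prob_space.prob_space_distr prob_space_imp_sigma_finite)
  then have "mean_pair_dist (distr M borel h)
               = (\<integral>\<^sup>+w. ennreal (dist (fst w) (snd w)) \<partial>(distr M borel h \<Otimes>\<^sub>M distr M borel h))"
    by (simp add: mean_pair_dist_eq_pair_measure)
  also have "\<dots> = (\<integral>\<^sup>+w. ennreal (dist (fst w) (snd w))
                     \<partial>distr (M \<Otimes>\<^sub>M M) (borel \<Otimes>\<^sub>M borel) (\<lambda>(x, y). (h x, h y)))"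
    using \<open>sigma_finite_measure (distr M borel h)\<close> by (simp add: pair_measure_distr)
  also have "\<dots> = (\<integral>\<^sup>+w. ennreal (dist (h (fst w)) (h (snd w))) \<partial>(M \<Otimes>\<^sub>M M))"
    by (subst nn_integral_distr) (auto simp: case_prod_beta)
  finally show ?thesis .
qed

lemma mean_pair_dist_le_first_moment:
  fixes \<alpha> :: "'a::euclidean_space measure"
  assumes "prob_space \<alpha>" "sets \<alpha> = sets borel"
  shows "mean_pair_dist \<alpha> \<le> 2 * (\<integral>\<^sup>+x. ennreal (norm x) \<partial>\<alpha>)"
  using nn_integral_couplings_dist_le[OF pair_measure_in_couplings[OF assms assms]]
  by (simp add: mean_pair_dist_eq_pair_measure assms prob_space_imp_sigma_finite mult_2)

lemma mean_pair_dist_pos: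
  fixes \<nu> :: "'a::euclidean_space measure"
  assumes "prob_space \<nu>" "sets \<nu> = sets borel" and not_dirac: "\<forall>x. \<nu> \<noteq> return borel x"
  shows "0 < mean_pair_dist \<nu>"
proof (rule ccontr)
  have pair: "pair_sigma_finite \<nu> \<nu>"
    using assms(1) by (simp add: pair_sigma_finite_def prob_space_imp_sigma_finite)
  have [measurable_cong]: "sets (\<nu> \<Otimes>\<^sub>M \<nu>) = sets borel"
    using sets_pair_measure_borel[OF assms(2) assms(2)] .
  assume "\<not> 0 < mean_pair_dist \<nu>"
  then have "(\<integral>\<^sup>+w. ennreal (dist (fst w) (snd w)) \<partial>(\<nu> \<Otimes>\<^sub>M \<nu>)) = 0"
    using assms(1,2) by (simp add: mean_pair_dist_eq_pair_measure prob_space_imp_sigma_finite)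
  then have "AE w in \<nu> \<Otimes>\<^sub>M \<nu>. snd w = fst w"
    by (subst (asm) nn_integral_0_iff_AE) (measurable, auto elim: eventually_mono)
  then have "AE y in \<nu>. AE z in \<nu>. z = y"
    using pair_sigma_finite.AE_pair[OF pair, of "\<lambda>w. snd w = fst w"] by simp
  then obtain y where "AE z in \<nu>. z = y"
    using eventually_happens'[OF prob_space.ae_filter_bot[OF assms(1)]] by blast
  then have "\<nu> = return \<nu> y"
    by (rule prob_space.AE_eq_constD(1)[OF assms(1)])
  also have "\<dots> = return borel y"
    using assms(2) by (rule return_cong)
  finally show False
    using not_dirac by blast
qed

lemma mean_pair_dist_le_couplings:
  fixes \<alpha> \<beta> :: "'a::euclidean_space measure"
  assumes "prob_space \<alpha>" "\<gamma> \<in> couplings \<alpha> \<beta>"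
  shows "mean_pair_dist \<beta>
           \<le> mean_pair_dist \<alpha> + 2 * (\<integral>\<^sup>+p. ennreal (dist (fst p) (snd p)) \<partial>\<gamma>)"
proof -
  let ?c = "\<integral>\<^sup>+p. ennreal (dist (fst p) (snd p)) \<partial>\<gamma>"
  have \<gamma>: "prob_space \<gamma>" "sets \<gamma> = sets borel"
    using assms couplings_prob_space couplings_sets by blast+
  have \<alpha>: "\<alpha> = distr \<gamma> borel fst" and \<beta>: "\<beta> = distr \<gamma> borel snd"
    using assms(2) by (simp_all add: couplings_def)
  have \<Gamma>: "\<gamma> \<Otimes>\<^sub>M \<gamma> \<in> couplings \<gamma> \<gamma>"
    using pair_measure_in_couplings[OF \<gamma> \<gamma>] .
  have [measurable_cong]: "sets (\<gamma> \<Otimes>\<^sub>M \<gamma>) = sets borel"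
    using sets_pair_measure_borel[OF \<gamma>(2) \<gamma>(2)] .
  have [measurable]: "fst \<in> \<gamma> \<rightarrow>\<^sub>M borel" "snd \<in> \<gamma> \<rightarrow>\<^sub>M borel"
    using \<gamma>(2) by (simp_all cong: measurable_cong_sets)
  have "mean_pair_dist \<beta> = (\<integral>\<^sup>+w. ennreal (dist (snd (fst w)) (snd (snd w))) \<partial>(\<gamma> \<Otimes>\<^sub>M \<gamma>))"
    unfolding \<beta> using \<gamma>(1) by (rule mean_pair_dist_distr) measurable
  also have "\<dots> \<le> (\<integral>\<^sup>+w. ennreal (dist (snd (fst w)) (fst (fst w)))
                        + ennreal (dist (fst (fst w)) (fst (snd w)))
                        + ennreal (dist (fst (snd w)) (snd (snd w))) \<partial>(\<gamma> \<Otimes>\<^sub>M \<gamma>))"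
    by (intro nn_integral_mono ennreal_dist_triangle3)
  also have "\<dots> = ?c + mean_pair_dist \<alpha> + ?c"
  proof -
    have "(\<integral>\<^sup>+w. ennreal (dist (snd (fst w)) (fst (fst w))) \<partial>(\<gamma> \<Otimes>\<^sub>M \<gamma>)) = ?c"
      using nn_integral_couplings_fst[OF \<Gamma>, of "\<lambda>p. ennreal (dist (fst p) (snd p))"]
      by (simp add: dist_commute)
    moreover have "(\<integral>\<^sup>+w. ennreal (dist (fst (snd w)) (snd (snd w))) \<partial>(\<gamma> \<Otimes>\<^sub>M \<gamma>)) = ?c"
      using nn_integral_couplings_snd[OF \<Gamma>, of "\<lambda>p. ennreal (dist (fst p) (snd p))"] by simp
    moreover have "(\<integral>\<^sup>+w. ennreal (dist (fst (fst w)) (fst (snd w))) \<partial>(\<gamma> \<Otimes>\<^sub>M \<gamma>)) = mean_pair_dist \<alpha>"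
      unfolding \<alpha> using \<gamma>(1) by (rule mean_pair_dist_distr[symmetric]) measurable
    ultimately show ?thesis
      by (simp add: nn_integral_add)
  qed
  finally show ?thesis
    by (simp add: mult_2 algebra_simps)
qed

lemma mean_pair_dist_le_W1:
  fixes \<alpha> \<beta> :: "'a::euclidean_space measure"
  assumes "prob_space \<alpha>" "mean_pair_dist \<beta> < top"
  shows "mean_pair_dist \<beta> \<le> mean_pair_dist \<alpha> + 2 * W1 \<alpha> \<beta>"
proof -
  have "(mean_pair_dist \<beta> - mean_pair_dist \<alpha>) / 2 \<le> W1 \<alpha> \<beta>"
    unfolding W1_def
    using assms by (intro INF_greatest ennreal_half_diff_le mean_pair_dist_le_couplings)
  then show ?thesis
    by (meson add_left_mono ennreal_le_add_twice_half_diff mult_left_mono order_trans zero_le)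
qed

lemma measurable_mean_pair_dist [measurable]:
  "mean_pair_dist \<in> borel_measurable (subprob_algebra (borel :: 'a::euclidean_space measure))"
proof -
  have "(\<lambda>w. \<integral>\<^sup>+z. ennreal (dist (snd w) z) \<partial>fst w)
          \<in> borel_measurable (subprob_algebra (borel :: 'a measure) \<Otimes>\<^sub>M borel)"
    by (rule nn_integral_measurable_subprob_algebra2) measurable
  then have "(\<lambda>(M, y). \<integral>\<^sup>+z. ennreal (dist y z) \<partial>M)
               \<in> borel_measurable (subprob_algebra (borel :: 'a measure) \<Otimes>\<^sub>M borel)"
    by (simp add: case_prod_beta')
  then show ?thesis
    unfolding mean_pair_dist_def
    by (rule nn_integral_measurable_subprob_algebra2[where L="\<lambda>M. M"]) measurable
qed

lemma is_disintegration_measurable: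
  "is_disintegration \<mu> \<pi> K \<Longrightarrow> K \<in> \<mu> \<rightarrow>\<^sub>M subprob_algebra borel"
  by (simp add: is_disintegration_def measurable_prob_algebraD)

lemma is_disintegration_kernel:
  assumes "is_disintegration \<mu> \<pi> K" "x \<in> space \<mu>"
  shows "prob_space (K x)" "sets (K x) = sets borel"
  using measurable_space[OF _ assms(2), of K "prob_algebra borel"] assms(1)
  by (simp_all add: is_disintegration_def space_prob_algebra)

lemma nn_integral_disintegration:
  fixes \<mu> :: "'a::euclidean_space measure" and \<nu> :: "'b::euclidean_space measure"
    and K :: "'a \<Rightarrow> 'b measure"
  assumes "is_disintegration \<mu> \<pi> K" "\<pi> \<in> couplings \<mu> \<nu>" "sets \<mu> = sets borel"
    and [measurable]: "f \<in> borel_measurable borel"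
  shows "(\<integral>\<^sup>+x. \<integral>\<^sup>+y. f y \<partial>K x \<partial>\<mu>) = (\<integral>\<^sup>+y. f y \<partial>\<nu>)"
proof -
  have [measurable_cong]: "sets \<mu> = sets borel"
    by fact
  have [measurable]: "K \<in> \<mu> \<rightarrow>\<^sub>M subprob_algebra borel"
    using assms(1) by (rule is_disintegration_measurable)
  have [measurable_cong]: "sets (\<mu> \<Otimes>\<^sub>M borel) = sets (borel :: ('a \<times> 'b) measure)"
    using assms(3) by (rule sets_pair_measure_borel) simp
  have kernel: "(\<lambda>x. K x \<bind> (\<lambda>y. return borel (x, y))) \<in> \<mu> \<rightarrow>\<^sub>M subprob_algebra borel"
    by (rule measurable_bind') measurable
  have "(\<integral>\<^sup>+y. f y \<partial>\<nu>) = (\<integral>\<^sup>+p. f (snd p) \<partial>\<pi>)"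
    using assms(2) by (rule nn_integral_couplings_snd) measurable
  also have "\<dots> = (\<integral>\<^sup>+x. \<integral>\<^sup>+p. f (snd p) \<partial>(K x \<bind> (\<lambda>y. return borel (x, y))) \<partial>\<mu>)"
    using assms(1) unfolding is_disintegration_def by (simp add: nn_integral_bind[OF _ kernel])
  also have "\<dots> = (\<integral>\<^sup>+x. \<integral>\<^sup>+y. f y \<partial>K x \<partial>\<mu>)"
  proof (rule nn_integral_cong)
    fix x assume "x \<in> space \<mu>"
    then have "sets (K x) = sets borel"
      using assms(1) by (simp add: is_disintegration_kernel)
    then have "K x \<bind> (\<lambda>y. return borel (x, y)) = distr (K x) borel (Pair x)"
      by (intro bind_return_distr') (auto cong: measurable_cong_sets simp: sets_eq_imp_space_eq)
    then show "(\<integral>\<^sup>+p. f (snd p) \<partial>(K x \<bind> (\<lambda>y. return borel (x, y)))) = (\<integral>\<^sup>+y. f y \<partial>K x)"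
      using \<open>sets (K x) = sets borel\<close> by (simp add: nn_integral_distr cong: measurable_cong_sets)
  qed
  finally show ?thesis ..
qed

lemma disintegration_first_moment_bounds:
  fixes \<mu> :: "'a::euclidean_space measure" and \<nu> :: "'b::euclidean_space measure"
    and K :: "'a \<Rightarrow> 'b measure"
  assumes "prob_space \<mu>" "sets \<mu> = sets borel" "prob_space \<nu>" "sets \<nu> = sets borel"
    and "\<pi> \<in> couplings \<mu> \<nu>" "is_disintegration \<mu> \<pi> K"
  shows "(\<integral>\<^sup>+x. mean_pair_dist (K x) \<partial>\<mu>) \<le> 2 * (\<integral>\<^sup>+y. ennreal (norm y) \<partial>\<nu>)"
    and "(\<integral>\<^sup>+x. W1 (K x) \<nu> \<partial>\<mu>) \<le> 2 * (\<integral>\<^sup>+y. ennreal (norm y) \<partial>\<nu>)"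
proof -
  define m where "m x = (\<integral>\<^sup>+y. ennreal (norm y) \<partial>K x)" for x
  have [measurable]: "K \<in> \<mu> \<rightarrow>\<^sub>M subprob_algebra borel"
    using assms(6) by (rule is_disintegration_measurable)
  have m [measurable]: "m \<in> borel_measurable \<mu>"
    unfolding m_def by measurable
  have int_m: "(\<integral>\<^sup>+x. m x \<partial>\<mu>) = (\<integral>\<^sup>+y. ennreal (norm y) \<partial>\<nu>)"
    unfolding m_def using assms(6,5,2) by (rule nn_integral_disintegration) measurable
  note K = is_disintegration_kernel[OF assms(6)]
  have "(\<integral>\<^sup>+x. mean_pair_dist (K x) \<partial>\<mu>) \<le> (\<integral>\<^sup>+x. 2 * m x \<partial>\<mu>)"
    unfolding m_def by (intro nn_integral_mono mean_pair_dist_le_first_moment K)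
  then show "(\<integral>\<^sup>+x. mean_pair_dist (K x) \<partial>\<mu>) \<le> 2 * (\<integral>\<^sup>+y. ennreal (norm y) \<partial>\<nu>)"
    by (simp add: nn_integral_cmult int_m)
  have "(\<integral>\<^sup>+x. W1 (K x) \<nu> \<partial>\<mu>) \<le> (\<integral>\<^sup>+x. m x + (\<integral>\<^sup>+y. ennreal (norm y) \<partial>\<nu>) \<partial>\<mu>)"
    unfolding m_def using assms(3,4) by (intro nn_integral_mono W1_le_first_moments K)
  then show "(\<integral>\<^sup>+x. W1 (K x) \<nu> \<partial>\<mu>) \<le> 2 * (\<integral>\<^sup>+y. ennreal (norm y) \<partial>\<nu>)"
    using assms(1) by (simp add: nn_integral_add int_m prob_space.emeasure_space_1 mult_2)
qed

text \<open>\<open>g\<close> need not be measurable (\<open>\<lambda>x. W1 (K x) \<nu>\<close> is not known to be), so only \<open>f\<close> may be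
  split off by \<open>nn_integral_add\<close>; the truncated difference \<open>c - f x\<close> takes care of the rest.\<close>

lemma le_nn_integral_add_twice:
  assumes "prob_space M" "f \<in> borel_measurable M" "c < top"
    and "\<And>x. x \<in> space M \<Longrightarrow> c \<le> f x + 2 * g x"
  shows "c \<le> (\<integral>\<^sup>+x. f x \<partial>M) + 2 * (\<integral>\<^sup>+x. g x \<partial>M)"
proof -
  have "c = (\<integral>\<^sup>+x. c \<partial>M)"
    using assms(1) by (simp add: prob_space.emeasure_space_1)
  also have "\<dots> \<le> (\<integral>\<^sup>+x. f x + 2 * ((c - f x) / 2) \<partial>M)"
    by (intro nn_integral_mono ennreal_le_add_twice_half_diff)
  also have "\<dots> = (\<integral>\<^sup>+x. f x \<partial>M) + 2 * (\<integral>\<^sup>+x. (c - f x) / 2 \<partial>M)"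
    using assms(2) by (simp add: nn_integral_add nn_integral_cmult)
  also have "\<dots> \<le> (\<integral>\<^sup>+x. f x \<partial>M) + 2 * (\<integral>\<^sup>+x. g x \<partial>M)"
    using assms(3,4) by (intro add_left_mono mult_left_mono nn_integral_mono ennreal_half_diff_le) auto
  finally show ?thesis .
qed

theorem mainTheorem5:
  fixes \<mu> \<nu> :: "'a::euclidean_space measure"
    and \<pi> :: "('a \<times> 'a) measure"
    and K :: "'a \<Rightarrow> 'a measure"
  assumes "prob_space \<mu>" and "sets \<mu> = sets borel"
    and "prob_space \<nu>" and "sets \<nu> = sets borel"
    and "integrable \<nu> norm"
    and "\<forall>x. \<nu> \<noteq> return borel x"
    and "\<pi> \<in> couplings \<mu> \<nu>"
    and "is_disintegration \<mu> \<pi> K"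
  shows "T_DGS \<mu> \<nu> K \<le> 2 * W_corr \<mu> \<nu> K"
proof -
  let ?D = "mean_pair_dist \<nu>" and ?E = "\<integral>\<^sup>+y. ennreal (norm y) \<partial>\<nu>"
  let ?A = "\<integral>\<^sup>+x. mean_pair_dist (K x) \<partial>\<mu>" and ?W = "\<integral>\<^sup>+x. W1 (K x) \<nu> \<partial>\<mu>"
  have [measurable]: "K \<in> \<mu> \<rightarrow>\<^sub>M subprob_algebra borel"
    using assms(8) by (rule is_disintegration_measurable)
  have "2 * ?E < top"
    using assms(5) by (simp add: integrable_iff_bounded less_top ennreal_mult_less_top)
  then have D: "?D < top" and A: "?A < top" and W: "2 * ?W < top"
    using mean_pair_dist_le_first_moment[OF assms(3,4)]
      disintegration_first_moment_bounds[OF assms(1-4,7,8)]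
    by (auto simp: ennreal_mult_less_top intro: le_less_trans)
  have "?D \<le> ?A + 2 * ?W"
    using assms(1) D is_disintegration_kernel[OF assms(8)]
    by (intro le_nn_integral_add_twice mean_pair_dist_le_W1) measurable
  from enn2real_one_minus_div_le[OF mean_pair_dist_pos[OF assms(3,4,6)] D A W this]
  show ?thesis
    by (simp add: T_DGS_def W_corr_def mean_pair_dist_def enn2real_mult)
qed

end
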